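(* Let $a,b,d>0$, $c\in\mathbb{R}$, and let $\phi(x)=\frac{ax^3+bx^2+cx+d}{x^3}$ for $x>0$. \begin{description} \item[(a)] The cubic polynomial $Q(x)=(4a)x^3-(b^2)x^2-(18abd)x+27a^2d^2+4db^3$ has a unique negative zero. \item[(b)] Let $c_{-}$ denote the unique negative zero of $Q$. If $c>c_{-}$, then for every initial value $x_0>0$ all iterates of $x_{n+1}=\phi(x_n)$ are positive, i.e. nonpositive iterates never occur. \item[(c)] Let $c^{*}=-\sqrt{3bd}$. Then $c_{-}<c^{*}$. \item[(d)] If $c\geq c^{*}$ then $\phi$ is decreasing on $(0,\infty)$ and has a unique (positive) equilibrium. If $c_{-}<c<c^{*}$ then $\phi$ has a local minimum point $x_m$ and a local maximum point $x_M$, where $$0<x_{m}=\frac{-c-\sqrt{c^2-3bd}}{b}<x_{M}=\frac{-c+\sqrt{c^2-3bd}}{b}.$$ \end{description}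
   Context: The map $\phi$ is the right-hand side of the difference equation $x_{n+1}=\frac{ax_n^3+bx_n^2+cx_n+d}{x_n^3}$, $x_0>0$. An equilibrium of $\phi$ is a point $t>0$ with $\phi(t)=t$. *)

theory Defs
  imports Complex_Main
begin

definition phi :: "real \<Rightarrow> real \<Rightarrow> real \<Rightarrow> real \<Rightarrow> real \<Rightarrow> real" where
  "phi a b c d x = (a * x ^ 3 + b * x ^ 2 + c * x + d) / x ^ 3"

definition Q :: "real \<Rightarrow> real \<Rightarrow> real \<Rightarrow> real \<Rightarrow> real" where
  "Q a b d x = 4 * a * x ^ 3 - b ^ 2 * x ^ 2 - 18 * a * b * d * x + 27 * a ^ 2 * d ^ 2 + 4 * d * b ^ 3"

definition c_minus :: "real \<Rightarrow> real \<Rightarrow> real \<Rightarrow> real" where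
  "c_minus a b d = (THE x. x < 0 \<and> Q a b d x = 0)"

definition is_local_min :: "(real \<Rightarrow> real) \<Rightarrow> real \<Rightarrow> bool" where
  "is_local_min f x \<longleftrightarrow> (\<exists>e>0. \<forall>y. \<bar>y - x\<bar> < e \<longrightarrow> f x \<le> f y)"

definition is_local_max :: "(real \<Rightarrow> real) \<Rightarrow> real \<Rightarrow> bool" where
  "is_local_max f x \<longleftrightarrow> (\<exists>e>0. \<forall>y. \<bar>y - x\<bar> < e \<longrightarrow> f y \<le> f x)"

end

theory Submission imports Defs begin

text \<open>Write p(x) = a x^3 + b x^2 + c x + d for the numerator of phi. As a polynomial in c,
  Q a b d c is minus the discriminant of p, and Q(x)/x is strictly decreasing for x < 0; so Q
  has a unique negative zero c_minus, and for negative c, Q(c) > 0 exactly when c > c_minus.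
  If p had a positive root t, its discriminant would be that of the quadratic p(x)/(x - t),
  whose constant term is -d/t < 0, times p'(t)^2, hence nonnegative. So for c > c_minus the
  numerator, and with it every iterate, stays positive (for c \<ge> 0 this is trivial).
  In the variable u = 1/x, phi is the cubic a + b u + c u^2 + d u^3, whose difference quotients
  are positive when c \<ge> -sqrt(3 b d); below that threshold the critical points of phi are the
  two roots of b x^2 + 2 c x + 3 d, and the sign of b x + c decides minimum or maximum.\<close>

subsection \<open>The cubic Q and its negative zero\<close>

lemma Q_div_strict_antimono:
  fixes a b d x z :: real
  assumes "a > 0" "b > 0" "d > 0" "z < x" "x < 0"
  shows "Q a b d x / x < Q a b d z / z"
proof -
  have xz: "x * z > 0" using assms by (simp add: mult_neg_neg)
  have "x * Q a b d z - z * Q a b d x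
      = 4*a*(x*z)*((x - z) * -(z + x)) + b^2*(x*z)*(x - z) + (27*a^2*d^2 + 4*d*b^3)*(x - z)"
    by (simp add: Q_def algebra_simps power2_eq_square power3_eq_cube)
  also have "\<dots> > 0"
  proof -
    have "(x - z) * -(z + x) > 0" using assms by (intro mult_pos_pos) auto
    then have "4*a*(x*z)*((x - z) * -(z + x)) > 0" using assms xz by simp
    moreover have "b^2*(x*z)*(x - z) > 0" using assms xz by simp
    moreover have "(27*a^2*d^2 + 4*d*b^3)*(x - z) > 0" using assms by (simp add: add_pos_pos)
    ultimately show ?thesis by simp
  qed
  finally have "(x * Q a b d z - z * Q a b d x) / (x * z) > 0" using xz by simp
  moreover have "(x * Q a b d z - z * Q a b d x) / (x * z) = Q a b d z / z - Q a b d x / x"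
    using assms by (simp add: field_simps)
  ultimately show ?thesis by linarith
qed

lemma Q_zero_pos:
  fixes a b d :: real
  assumes "a > 0" "b > 0" "d > 0"
  shows "Q a b d 0 > 0"
  using assms by (simp add: Q_def add_pos_pos)

lemma Q_has_negative_zero:
  fixes a b d :: real
  assumes a: "a > 0" and b: "b > 0" and d: "d > 0"
  shows "\<exists>x<0. Q a b d x = 0"
proof -
  define K where "K = 27 * a ^ 2 * d ^ 2 + 4 * d * b ^ 3"
  have K: "K > 0" using a b d by (simp add: K_def add_pos_pos)
  define U where "U = 1 + (K + 18*a*b*d)/b^2"
  have U1: "U \<ge> 1" using K a b d by (simp add: U_def)
  have "b^2 * U > K + 18*a*b*d" using b K by (simp add: U_def field_simps)
  then have "b^2 * U * U > (K + 18*a*b*d) * U" using U1 by simp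
  moreover have "(K + 18*a*b*d) * U \<ge> K + 18*a*b*d*U" using U1 K by (simp add: algebra_simps)
  moreover have "4*a*U^3 > 0" using a U1 by simp
  moreover have "Q a b d (-U) = K + 18*a*b*d*U - b^2*U^2 - 4*a*U^3"
    by (simp add: Q_def K_def power2_eq_square power3_eq_cube)
  ultimately have QU: "Q a b d (-U) < 0" by (simp add: power2_eq_square)
  have "continuous_on {-U..0} (Q a b d)" unfolding Q_def by (intro continuous_intros)
  then obtain x where x: "-U \<le> x" "x \<le> 0" "Q a b d x = 0"
    using IVT'[of "Q a b d" "-U" 0 0] QU Q_zero_pos[OF a b d] U1 by auto
  moreover have "x \<noteq> 0" using x Q_zero_pos[OF a b d] by auto
  ultimately show ?thesis by (intro exI[of _ x]) auto
qed

lemma Q_sign_around_negative_zero: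
  fixes a b d x z :: real
  assumes a: "a > 0" and b: "b > 0" and d: "d > 0"
    and z: "z < 0" "Q a b d z = 0" and x: "x < 0"
  shows "Q a b d x > 0 \<longleftrightarrow> z < x"
proof (cases x z rule: linorder_cases)
  case less
  then have "Q a b d x / x > 0" using Q_div_strict_antimono[OF a b d less z(1)] z by simp
  then show ?thesis using less x by (simp add: zero_less_divide_iff)
next
  case greater
  then have "Q a b d x / x < 0" using Q_div_strict_antimono[OF a b d greater x] z by simp
  then show ?thesis using greater x by (simp add: divide_less_0_iff)
qed (use z in simp)

lemma Q_unique_negative_zero:
  fixes a b d :: real
  assumes "a > 0" "b > 0" "d > 0"
  shows "\<exists>!x. x < 0 \<and> Q a b d x = 0"
proof -
  obtain z where z: "z < 0" "Q a b d z = 0" using Q_has_negative_zero[OF assms] by blast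
  show ?thesis
  proof (rule ex1I[of _ z])
    fix y assume "y < 0 \<and> Q a b d y = 0"
    then have y: "y < 0" "Q a b d y = 0" by simp_all
    show "y = z"
      using Q_sign_around_negative_zero[OF assms z y(1)] Q_sign_around_negative_zero[OF assms y z(1)]
        y z by simp
  qed (use z in simp)
qed

lemma c_minus_is_negative_zero:
  fixes a b d :: real
  assumes "a > 0" "b > 0" "d > 0"
  shows "c_minus a b d < 0" and "Q a b d (c_minus a b d) = 0"
  using theI'[OF Q_unique_negative_zero[OF assms]] by (simp_all add: c_minus_def)

lemma Q_pos_iff_greater_c_minus:
  fixes a b d x :: real
  assumes "a > 0" "b > 0" "d > 0" "x < 0"
  shows "Q a b d x > 0 \<longleftrightarrow> c_minus a b d < x"
  using Q_sign_around_negative_zero[OF assms(1-3) c_minus_is_negative_zero[OF assms(1-3)] assms(4)] .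

lemma Q_neg_sqrt_pos:
  fixes a b d :: real
  assumes a: "a > 0" and b: "b > 0" and d: "d > 0"
  shows "Q a b d (- sqrt (3*b*d)) > 0"
proof -
  define s where "s = sqrt (3*b*d)"
  have s2: "s^2 = 3*b*d" and s3: "s^3 = 3*b*d*s" and s0: "s > 0"
    using b d by (simp_all add: s_def power3_eq_cube)
  have "Q a b d (-s) = -4*a*s^3 - b^2*s^2 + 18*a*b*d*s + 27*a^2*d^2 + 4*d*b^3"
    by (simp add: Q_def)
  also have "\<dots> = 6*a*b*d*s + b^3*d + 27*a^2*d^2"
    unfolding s3 s2 by (simp add: algebra_simps power2_eq_square power3_eq_cube)
  also have "\<dots> > 0" using a b d s0 by (simp add: add_pos_pos)
  finally show ?thesis by (simp add: s_def)
qed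

lemma c_minus_less_neg_sqrt:
  fixes a b d :: real
  assumes "a > 0" "b > 0" "d > 0"
  shows "c_minus a b d < - sqrt (3*b*d)"
  using Q_pos_iff_greater_c_minus[OF assms, of "- sqrt (3*b*d)"] Q_neg_sqrt_pos[OF assms] assms
  by simp

subsection \<open>Positivity of the iterates\<close>

text \<open>The first factor is the discriminant of the quotient in
  p(x) = (x - t)(a x^2 + (b + a t) x + (c + b t + a t^2)), the second is p'(t)^2.\<close>
lemma Q_at_numerator_root:
  fixes a b c d t :: real
  assumes "a*t^3 + b*t^2 + c*t + d = 0"
  shows "- Q a b d c = ((b + a*t)^2 - 4*a*(c + b*t + a*t^2)) * (3*a*t^2 + 2*b*t + c)^2"
proof -
  have "- Q a b (-(a*t^3 + b*t^2 + c*t)) c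
      = ((b + a*t)^2 - 4*a*(c + b*t + a*t^2)) * (3*a*t^2 + 2*b*t + c)^2"
    unfolding Q_def by (simp add: algebra_simps power2_eq_square power3_eq_cube)
  moreover have "d = -(a*t^3 + b*t^2 + c*t)" using assms by simp
  ultimately show ?thesis by simp
qed

lemma numerator_pos_if_Q_pos:
  fixes a b c d x :: real
  assumes a: "a > 0" and d: "d > 0" and Q: "Q a b d c > 0" and x: "x > 0"
  shows "a*x^3 + b*x^2 + c*x + d > 0"
proof (rule ccontr)
  let ?p = "\<lambda>t::real. a*t^3 + b*t^2 + c*t + d"
  assume "\<not> ?p x > 0"
  moreover have "continuous_on {0..x} ?p" by (intro continuous_intros)
  ultimately obtain t where t: "0 \<le> t" "t \<le> x" "?p t = 0"
    using IVT2[of ?p x 0 0] x d by auto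
  then have "t \<noteq> 0" using d by auto
  with t have "t > 0" by simp
  have "t * (c + b*t + a*t^2) = -d"
    using t by (simp add: algebra_simps power2_eq_square power3_eq_cube)
  then have "t * (c + b*t + a*t^2) < 0" using d by simp
  then have "c + b*t + a*t^2 < 0" using \<open>t > 0\<close> by (simp add: mult_less_0_iff)
  then have "a * (c + b*t + a*t^2) < 0" using a by (simp add: mult_pos_neg)
  then have "(b + a*t)^2 - 4*a*(c + b*t + a*t^2) > 0"
    using zero_le_power2[of "b + a*t"] by linarith
  then have "- Q a b d c \<ge> 0" unfolding Q_at_numerator_root[OF t(3)] by simp
  with Q show False by simp
qed

lemma phi_pos:
  fixes a b c d x :: real
  assumes a: "a > 0" and b: "b > 0" and d: "d > 0" and c: "c > c_minus a b d" and x: "x > 0"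
  shows "phi a b c d x > 0"
proof -
  have "a*x^3 + b*x^2 + c*x + d > 0"
  proof (cases "c \<ge> 0")
    case True
    then show ?thesis using a b d x by (simp add: add_pos_pos add_pos_nonneg)
  next
    case False
    then have "Q a b d c > 0" using Q_pos_iff_greater_c_minus[OF a b d, of c] c by simp
    then show ?thesis using numerator_pos_if_Q_pos[OF a d _ x] by simp
  qed
  then show ?thesis using x by (simp add: phi_def)
qed

lemma phi_iterates_pos:
  fixes a b c d x :: real
  assumes "a > 0" "b > 0" "d > 0" "c > c_minus a b d" "x > 0"
  shows "((phi a b c d) ^^ n) x > 0"
  by (induction n) (use assms phi_pos[OF assms(1-4)] in auto)

subsection \<open>Monotonicity and the equilibrium\<close>

lemma phi_reciprocal: "x \<noteq> 0 \<Longrightarrow> phi a b c d x = a + b*(1/x) + c*(1/x)^2 + d*(1/x)^3"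
  by (simp add: phi_def field_simps power2_eq_square power3_eq_cube)

lemma phi_strict_antimono:
  fixes a b c d x y :: real
  assumes b: "b > 0" and d: "d > 0" and c: "c \<ge> - sqrt (3*b*d)" and "0 < x" "x < y"
  shows "phi a b c d y < phi a b c d x"
proof -
  define u where "u = 1/x"
  define v where "v = 1/y"
  have uv: "0 < v" "v < u" using assms by (auto simp: u_def v_def frac_less2)
  define M where "M = b + c*(u+v) + d*(u^2+u*v+v^2)"
  have "phi a b c d x = a + b*u + c*u^2 + d*u^3" "phi a b c d y = a + b*v + c*v^2 + d*v^3"
    using assms phi_reciprocal[of x a b c d] phi_reciprocal[of y a b c d] by (simp_all add: u_def v_def)
  then have diff: "phi a b c d x - phi a b c d y = (u - v) * M"
    by (simp add: M_def algebra_simps power2_eq_square power3_eq_cube)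
  have "M > 0"
  proof (cases "c \<ge> 0")
    case True
    then show ?thesis using uv b d by (simp add: M_def add_pos_nonneg)
  next
    case False
    with c have "(-c)^2 \<le> sqrt (3*b*d) ^ 2" by (intro power_mono) auto
    then have "c^2 \<le> 3*b*d" using b d by simp
    have "12*d*M = (2*c + 3*d*(u+v))^2 + (12*b*d - 4*c^2) + 3*d^2*(u-v)^2"
      by (simp add: M_def algebra_simps power2_eq_square)
    moreover have "3*d^2*(u-v)^2 > 0" using uv d by simp
    moreover have "(2*c + 3*d*(u+v))^2 \<ge> 0" by simp
    ultimately have "12*d*M > 0" using \<open>c^2 \<le> 3*b*d\<close> by linarith
    then show ?thesis using d by (simp add: zero_less_mult_iff)
  qed
  with uv have "(u - v) * M > 0" by simp
  with diff show ?thesis by linarith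
qed

lemma phi_has_fixed_point:
  fixes a b c d :: real
  assumes a: "a > 0" and b: "b > 0" and d: "d > 0"
  shows "\<exists>t>0. phi a b c d t = t"
proof -
  define p where "p = (\<lambda>t::real. t^4 - (a*t^3 + b*t^2 + c*t + d))"
  define T where "T = 1 + a + b + \<bar>c\<bar> + d"
  have T1: "T \<ge> 1" using a b d by (simp add: T_def)
  have T3: "T^3 \<ge> T^2" "T^2 \<ge> T"
    using T1 power_increasing[of 2 3 T] power_increasing[of 1 2 T] by simp_all
  have "T^4 = T^3 * T" by (simp add: power_def)
  also have "\<dots> = T^3 + a*T^3 + b*T^3 + \<bar>c\<bar>*T^3 + d*T^3" by (simp add: T_def algebra_simps)
  finally have T4: "T^4 = T^3 + a*T^3 + b*T^3 + \<bar>c\<bar>*T^3 + d*T^3" .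
  have "b*T^3 \<ge> b*T^2" using b T3 by simp
  moreover have "\<bar>c\<bar>*T^3 \<ge> \<bar>c\<bar>*T" using T3 by (intro mult_left_mono) auto
  moreover have "\<bar>c\<bar>*T \<ge> c*T" using T1 by (intro mult_right_mono) auto
  moreover have "d*T^3 \<ge> d" using d T1 by simp
  moreover have "T^3 > 0" using T1 by simp
  ultimately have pT: "p T > 0" unfolding p_def using T4 by linarith
  have p0: "p 0 < 0" using d by (simp add: p_def)
  have "continuous_on {0..T} p" unfolding p_def by (intro continuous_intros)
  then obtain t where t: "0 \<le> t" "t \<le> T" "p t = 0"
    using IVT'[of p 0 0 T] pT p0 T1 by auto
  then have "t > 0" using p0 by (cases "t = 0") auto
  moreover have "phi a b c d t = t^4 / t^3" using t by (simp add: phi_def p_def)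
  ultimately show ?thesis by (intro exI[of _ t]) (simp add: power_def field_simps)
qed

lemma phi_unique_fixed_point:
  fixes a b c d :: real
  assumes "a > 0" "b > 0" "d > 0" "c \<ge> - sqrt (3*b*d)"
  shows "\<exists>!t. t > 0 \<and> phi a b c d t = t"
proof -
  obtain t where t: "t > 0" "phi a b c d t = t" using phi_has_fixed_point[OF assms(1-3)] by blast
  show ?thesis
  proof (rule ex1I[of _ t])
    fix u assume u: "u > 0 \<and> phi a b c d u = u"
    show "u = t"
    proof (rule ccontr)
      assume "u \<noteq> t"
      then consider "u < t" | "t < u" by linarith
      then show False
        using phi_strict_antimono[OF assms(2-4), where a=a and x=u and y=t]
          phi_strict_antimono[OF assms(2-4), where a=a and x=t and y=u]
          t u by (cases; simp)
    qed
  qed (use t in simp)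
qed

subsection \<open>Local extrema\<close>

lemma is_local_min_iff_eventually: "is_local_min f x \<longleftrightarrow> (\<forall>\<^sub>F y in nhds x. f x \<le> f y)"
  by (simp add: is_local_min_def eventually_nhds_metric dist_real_def)

lemma is_local_max_iff_eventually: "is_local_max f x \<longleftrightarrow> (\<forall>\<^sub>F y in nhds x. f y \<le> f x)"
  by (simp add: is_local_max_def eventually_nhds_metric dist_real_def)

text \<open>Since phi'(x) = -(b x^2 + 2 c x + 3 d) / x^4, the hypothesis says that x is a critical
  point; phi(y) - phi(x) then has the double factor (y - x)^2.\<close>
lemma phi_diff_at_critical_point:
  fixes a b c d x y :: real
  assumes x: "x > 0" and y: "y > 0" and crit: "b*x^2 + 2*c*x + 3*d = 0"
  shows "phi a b c d y - phi a b c d x = (y - x)^2 * (d*x + (c*x + 2*d)*y) / (x^3*y^3)"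
proof -
  have "phi a b c d y - phi a b c d x
      = ((a*y^3 + b*y^2 + c*y + d)*x^3 - (a*x^3 + b*x^2 + c*x + d)*y^3) / (x^3*y^3)"
    using x y by (simp add: phi_def field_simps)
  also have "(a*y^3 + b*y^2 + c*y + d)*x^3 - (a*x^3 + b*x^2 + c*x + d)*y^3
      = (y - x)^2 * (d*x + (c*x + 2*d)*y) - (y - x)*y^2*(b*x^2 + 2*c*x + 3*d)"
    by (simp add: algebra_simps power2_eq_square power3_eq_cube)
  finally show ?thesis using crit by simp
qed

text \<open>At y = x the second factor d x + (c x + 2 d) y equals -x^2 (b x + c), by criticality;
  by continuity it keeps that sign near x.\<close>
lemma phi_near_critical_point:
  fixes a b c d x :: real
  assumes x: "x > 0" and crit: "b*x^2 + 2*c*x + 3*d = 0"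
  shows "b*x + c < 0 \<Longrightarrow> \<forall>\<^sub>F y in nhds x. phi a b c d x \<le> phi a b c d y"
    and "b*x + c > 0 \<Longrightarrow> \<forall>\<^sub>F y in nhds x. phi a b c d y \<le> phi a b c d x"
proof -
  let ?g = "\<lambda>y. d*x + (c*x + 2*d)*y"
  have "?g x + x^2 * (b*x + c) = x * (b*x^2 + 2*c*x + 3*d)"
    by (simp add: algebra_simps power2_eq_square)
  then have g_x: "?g x = - (x^2 * (b*x + c))" using crit by simp
  have g_lim: "(?g \<longlongrightarrow> ?g x) (nhds x)" by (intro tendsto_intros filterlim_ident)
  have pos: "\<forall>\<^sub>F y in nhds x. y > 0" using x by (rule eventually_nhds_in_open[OF open_greaterThan, simplified])
  have diff: "\<forall>\<^sub>F y in nhds x.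
      phi a b c d y - phi a b c d x = (y - x)^2 * ?g y / (x^3*y^3)"
    using pos by eventually_elim (use phi_diff_at_critical_point[OF x _ crit] in auto)
  show "\<forall>\<^sub>F y in nhds x. phi a b c d x \<le> phi a b c d y" if "b*x + c < 0"
  proof -
    have "?g x > 0" using g_x x that by (simp add: mult_pos_neg)
    then have "\<forall>\<^sub>F y in nhds x. ?g y > 0" using order_tendstoD(1)[OF g_lim] by simp
    with pos diff show ?thesis
    proof eventually_elim
      case (elim y)
      then have "(y - x)^2 * ?g y / (x^3*y^3) \<ge> 0"
        using x by (intro divide_nonneg_pos mult_nonneg_nonneg) auto
      with elim show ?case by simp
    qed
  qed
  show "\<forall>\<^sub>F y in nhds x. phi a b c d y \<le> phi a b c d x" if "b*x + c > 0"
  proof -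
    have "?g x < 0" using g_x x that by simp
    then have "\<forall>\<^sub>F y in nhds x. ?g y < 0" using order_tendstoD(2)[OF g_lim] by simp
    with pos diff show ?thesis
    proof eventually_elim
      case (elim y)
      then have "(y - x)^2 * ?g y / (x^3*y^3) \<le> 0"
        using x by (intro divide_nonpos_pos mult_nonneg_nonpos) auto
      with elim show ?case by simp
    qed
  qed
qed

lemma critical_point_formula:
  fixes b c d r x :: real
  assumes "b \<noteq> 0" and "r^2 = c^2 - 3*b*d" and "x = (-c + r)/b"
  shows "b*x^2 + 2*c*x + 3*d = 0" and "b*x + c = r"
proof -
  have bx: "b*x = r - c" using assms(1,3) by simp
  have "b*(b*x^2 + 2*c*x + 3*d) = (b*x)^2 + 2*c*(b*x) + 3*b*d"
    by (simp add: algebra_simps power2_eq_square)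
  also have "\<dots> = 0" unfolding bx using assms(2) by (simp add: algebra_simps power2_eq_square)
  finally show "b*x^2 + 2*c*x + 3*d = 0" using assms(1) by simp
  show "b*x + c = r" using bx by simp
qed

lemma phi_local_extrema:
  fixes a b c d :: real
  assumes b: "b > 0" and d: "d > 0" and c: "c < - sqrt (3*b*d)"
  defines "r \<equiv> sqrt (c^2 - 3*b*d)"
  shows "0 < (-c - r)/b" and "(-c - r)/b < (-c + r)/b"
    and "is_local_min (phi a b c d) ((-c - r)/b)"
    and "is_local_max (phi a b c d) ((-c + r)/b)"
proof -
  have "sqrt (3*b*d) ^ 2 < (-c)^2" using c b d by (intro power_strict_mono) auto
  then have "c^2 > 3*b*d" using b d by simp
  then have r0: "r > 0" and r2: "r^2 = c^2 - 3*b*d" by (simp_all add: r_def)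
  have "sqrt (3*b*d) \<ge> 0" using b d by simp
  with c have "0 \<le> -c" by linarith
  moreover have "r^2 < (-c)^2" using r2 b d by simp
  ultimately have "r < -c" using power_less_imp_less_base[of r 2 "-c"] by simp
  then show xm_pos: "0 < (-c - r)/b" using b by simp
  show "(-c - r)/b < (-c + r)/b" using r0 b by (simp add: divide_strict_right_mono)
  then have xM_pos: "0 < (-c + r)/b" using xm_pos by linarith
  have "(-r)^2 = c^2 - 3*b*d" using r2 by simp
  then have crit_m: "b*((-c - r)/b)^2 + 2*c*((-c - r)/b) + 3*d = 0" "b*((-c - r)/b) + c = -r"
    using critical_point_formula[of b "-r" c d "(-c - r)/b"] b by simp_all
  have crit_M: "b*((-c + r)/b)^2 + 2*c*((-c + r)/b) + 3*d = 0" "b*((-c + r)/b) + c = r"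
    using critical_point_formula[of b r c d "(-c + r)/b"] b r2 by simp_all
  show "is_local_min (phi a b c d) ((-c - r)/b)"
    unfolding is_local_min_iff_eventually
    using phi_near_critical_point(1)[OF xm_pos crit_m(1)] crit_m(2) r0 by simp
  show "is_local_max (phi a b c d) ((-c + r)/b)"
    unfolding is_local_max_iff_eventually
    using phi_near_critical_point(2)[OF xM_pos crit_M(1)] crit_M(2) r0 by simp
qed

theorem theorem1:
  fixes a b c d :: real
  assumes "a > 0" and "b > 0" and "d > 0"
  shows "(\<exists>!x. x < 0 \<and> Q a b d x = 0)
    \<and> (c > c_minus a b d \<longrightarrow>
         (\<forall>x0 > 0. \<forall>n. ((phi a b c d) ^^ n) x0 > 0))
    \<and> c_minus a b d < - sqrt (3 * b * d)
    \<and> (c \<ge> - sqrt (3 * b * d) \<longrightarrow>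
         (\<forall>x y. 0 < x \<and> x < y \<longrightarrow> phi a b c d y < phi a b c d x)
         \<and> (\<exists>!t. t > 0 \<and> phi a b c d t = t))
    \<and> (c_minus a b d < c \<and> c < - sqrt (3 * b * d) \<longrightarrow>
         (let xm = (- c - sqrt (c ^ 2 - 3 * b * d)) / b;
              xM = (- c + sqrt (c ^ 2 - 3 * b * d)) / b
          in 0 < xm \<and> xm < xM
             \<and> is_local_min (phi a b c d) xm
             \<and> is_local_max (phi a b c d) xM))"
proof (intro conjI impI allI)
  show "\<exists>!x. x < 0 \<and> Q a b d x = 0" by (rule Q_unique_negative_zero[OF assms])
  show "c_minus a b d < - sqrt (3 * b * d)" by (rule c_minus_less_neg_sqrt[OF assms])
  show "((phi a b c d) ^^ n) x0 > 0" if "c > c_minus a b d" "x0 > 0" for x0 n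
    using phi_iterates_pos[OF assms that] .
  show "phi a b c d y < phi a b c d x" if "c \<ge> - sqrt (3 * b * d)" "0 < x \<and> x < y" for x y
    using phi_strict_antimono[OF assms(2,3)] that by blast
  show "\<exists>!t. t > 0 \<and> phi a b c d t = t" if "c \<ge> - sqrt (3 * b * d)"
    using phi_unique_fixed_point[OF assms that] .
  show "let xm = (- c - sqrt (c ^ 2 - 3 * b * d)) / b;
            xM = (- c + sqrt (c ^ 2 - 3 * b * d)) / b
        in 0 < xm \<and> xm < xM \<and> is_local_min (phi a b c d) xm \<and> is_local_max (phi a b c d) xM"
    if "c_minus a b d < c \<and> c < - sqrt (3 * b * d)"
    using phi_local_extrema[OF assms(2,3) conjunct2[OF that]] by (simp add: Let_def)
qed

end
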